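(* Let $m,n\in\mathbb{N}$ be coprime with $1\le m\le n-1$, and let $\Gamma$ be a $\mathbb{D}_n$-symmetric billiard curve with equivariant parametrization $\gamma$. Let $Z\in\Gamma^{\mathbb{Z}}$ be an $n$-periodic billiard sequence of rotation number $\frac mn$ with lift $X\in\Sigma$, and suppose every rotation in $\mathbb{Z}_n=\langle R\rangle$ is a spatiotemporal symmetry of $Z$. Then: - $Z$ is Birkhoff, $Z_i=R^{mi}(Z_0)$, and $X_i=X_0+\frac mni$ for all $i$; - the segment length $\|Z_{i+1}-Z_i\|$ and the curvature $\kappa(Z_i)$ are independent of $i$; - if moreover $Z$ is a billiard orbit, then $\theta_i:=\tfrac12\angle(Z_{i+1}-Z_i,\,Z_i-Z_{i-1})=\frac{m\pi}{n}$ for all $i$.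
   Context: $\mathbb{D}_n=\langle R,S\rangle$, where $R$ is counterclockwise rotation by $2\pi/n$ and $S$ is the horizontal reflection. $\Gamma$ is a $C^2$ simple closed $\mathbb{D}_n$-invariant curve bounding a strictly convex domain, parametrized counterclockwise by a $1$-periodic $C^2$ immersion $\gamma$ descending to an embedding of $\mathbb{R}/\mathbb{Z}$, with $\gamma(x+1/n)=R\gamma(x)$ and $\gamma(-x)=S\gamma(x)$. A billiard sequence has $Z_i\ne Z_{i+1}$, with lift $X\in\Sigma=\{0<X_{i+1}-X_i<1\}$, $\gamma(X_i)=Z_i$. The rotation number is $\lim X_i/i$. $h$ is a spatiotemporal symmetry of $Z$ if there is $k$ with $h(Z_i)=Z_{k+i}$ for all $i$ or $h(Z_i)=Z_{k-i}$ for all $i$. Birkhoff means the lift satisfies $X_i\le X_j+l\Rightarrow X_{i+m}\le X_{j+m}+l$ for all integers. A billiard orbit is a billiard sequence satisfying the reflection law at each point. $\kappa$ is the curvature of $\Gamma$. *)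

theory Defs
  imports "HOL-Complex_Analysis.Complex_Analysis"
begin

text \<open>The plane is modelled by the complex numbers. R = rotation by 2pi/n,
  S = horizontal reflection = complex conjugation.\<close>

definition Rpow :: "nat \<Rightarrow> int \<Rightarrow> complex \<Rightarrow> complex" where
  "Rpow n k z = cis (2 * pi * real_of_int k / real n) * z"

abbreviation rotR :: "nat \<Rightarrow> complex \<Rightarrow> complex" where
  "rotR n \<equiv> Rpow n 1"

abbreviation reflS :: "complex \<Rightarrow> complex" where
  "reflS \<equiv> cnj"

definition tangent :: "(real \<Rightarrow> complex) \<Rightarrow> real \<Rightarrow> complex" where
  "tangent \<gamma> x = vector_derivative \<gamma> (at x)"

definition accel :: "(real \<Rightarrow> complex) \<Rightarrow> real \<Rightarrow> complex" where
  "accel \<gamma> x = vector_derivative (tangent \<gamma>) (at x)"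

definition curvature :: "(real \<Rightarrow> complex) \<Rightarrow> real \<Rightarrow> real" where
  "curvature \<gamma> x = Im (cnj (tangent \<gamma> x) * accel \<gamma> x) / (cmod (tangent \<gamma> x)) ^ 3"

definition C2_curve :: "(real \<Rightarrow> complex) \<Rightarrow> bool" where
  "C2_curve \<gamma> \<longleftrightarrow> (\<forall>x. \<gamma> differentiable at x) \<and> (\<forall>x. tangent \<gamma> differentiable at x)
     \<and> continuous_on UNIV (accel \<gamma>)"

definition Dn_billiard_curve :: "nat \<Rightarrow> (real \<Rightarrow> complex) \<Rightarrow> bool" where
  "Dn_billiard_curve n \<gamma> \<longleftrightarrow>
     C2_curve \<gamma>
   \<and> (\<forall>x. tangent \<gamma> x \<noteq> 0)
   \<and> (\<forall>x. \<gamma> (x + 1) = \<gamma> x)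
   \<and> (\<forall>x y. \<gamma> x = \<gamma> y \<longrightarrow> x - y \<in> \<int>)
   \<and> (\<exists>D. convex D \<and> compact D \<and> frontier D = range \<gamma>
        \<and> (\<forall>a\<in>D. \<forall>b\<in>D. a \<noteq> b \<longrightarrow> open_segment a b \<subseteq> interior D)
        \<and> (\<forall>z\<in>interior D. winding_number \<gamma> z = 1))
   \<and> (\<forall>x. \<gamma> (x + 1 / real n) = rotR n (\<gamma> x))
   \<and> (\<forall>x. \<gamma> (- x) = reflS (\<gamma> x))"

definition billiard_sequence :: "(real \<Rightarrow> complex) \<Rightarrow> (int \<Rightarrow> complex) \<Rightarrow> bool" where
  "billiard_sequence \<gamma> Z \<longleftrightarrow> (\<forall>i. Z i \<in> range \<gamma> \<and> Z i \<noteq> Z (i + 1))"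

definition is_lift :: "(real \<Rightarrow> complex) \<Rightarrow> (int \<Rightarrow> complex) \<Rightarrow> (int \<Rightarrow> real) \<Rightarrow> bool" where
  "is_lift \<gamma> Z X \<longleftrightarrow> (\<forall>i. 0 < X (i + 1) - X i \<and> X (i + 1) - X i < 1 \<and> \<gamma> (X i) = Z i)"

definition has_rotation_number :: "(int \<Rightarrow> real) \<Rightarrow> real \<Rightarrow> bool" where
  "has_rotation_number X \<rho> \<longleftrightarrow> ((\<lambda>i::int. X i / real_of_int i) \<longlongrightarrow> \<rho>) at_top"

definition spatiotemporal_symmetry :: "(complex \<Rightarrow> complex) \<Rightarrow> (int \<Rightarrow> complex) \<Rightarrow> bool" where
  "spatiotemporal_symmetry h Z \<longleftrightarrow>
     (\<exists>k::int. (\<forall>i. h (Z i) = Z (k + i)) \<or> (\<forall>i. h (Z i) = Z (k - i)))"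

definition Birkhoff :: "(int \<Rightarrow> real) \<Rightarrow> bool" where
  "Birkhoff X \<longleftrightarrow> (\<forall>i j l s::int. X i \<le> X j + l \<longrightarrow> X (i + s) \<le> X (j + s) + l)"

text \<open>Reflection law at Z_i: the outgoing unit direction minus the incoming unit
  direction is normal to the tangent of Gamma at Z_i = gamma(X_i).\<close>
definition billiard_orbit :: "(real \<Rightarrow> complex) \<Rightarrow> (int \<Rightarrow> complex) \<Rightarrow> (int \<Rightarrow> real) \<Rightarrow> bool" where
  "billiard_orbit \<gamma> Z X \<longleftrightarrow> billiard_sequence \<gamma> Z \<and> is_lift \<gamma> Z X \<and>
     (\<forall>i. ((Z (i + 1) - Z i) / cmod (Z (i + 1) - Z i) - (Z i - Z (i - 1)) / cmod (Z i - Z (i - 1)))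
            \<bullet> tangent \<gamma> (X i) = 0)"

text \<open>Oriented angle from v to u (counterclockwise), taking values in [0, 2pi).\<close>
definition oangle :: "complex \<Rightarrow> complex \<Rightarrow> real" where
  "oangle u v = (if 0 \<le> Arg (u / v) then Arg (u / v) else Arg (u / v) + 2 * pi)"

end

theory Submission
  imports Defs
begin

(*
  The rotation R is itself a spatiotemporal symmetry: R Z_i = Z_(s+i) for all i, or
  R Z_i = Z_(s-i) for all i.  Since gamma is injective modulo 1 and gamma(x + 1/n) = R gamma(x),
  this lifts to X_(s+i) = X_i + 1/n (resp. X_(s-i) = X_i + 1/n) modulo 1, and since all steps
  X_(i+1) - X_i lie in (0,1), such congruences between shifted copies of X are exact.
  Periodicity gives the translation X_(i+n) = X_i + m, its gain being fixed by the rotation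
  number.  In the forward case X_(i+s) = X_i + c with c = 1/n modulo 1, so n c = s m yields a
  Bezout relation s m - n t = 1, and composing the two translations gives X_(i+1) = X_i + m/n.
  In the time-reversing case mirrored pairs of steps must sum to 1, which forces n = 2m, hence
  (m, n) = (1, 2), and a parity argument shows that every step is 1/2.
  Once X is affine, equivariance gives Z_i = R^(m i) Z_0; the remaining claims hold because
  rotations are isometries preserving curvature and Z_(i+1) - Z_i = R^m (Z_i - Z_(i-1)).
*)

lemma Rpow_add: "Rpow n (j + k) z = Rpow n j (Rpow n k z)"
  by (simp add: Rpow_def cis_mult add_divide_distrib distrib_left)

lemma Rpow_0 [simp]: "Rpow n 0 z = z"
  by (simp add: Rpow_def)

lemma Rpow_diff: "Rpow n k (z - w) = Rpow n k z - Rpow n k w"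
  by (simp add: Rpow_def right_diff_distrib)

lemma norm_Rpow [simp]: "cmod (Rpow n k z) = cmod z"
  by (simp add: Rpow_def norm_mult)

lemma equivariant_shift_Rpow:
  assumes rot: "\<And>x. \<gamma> (x + 1 / real n) = rotR n (\<gamma> x)"
  shows "\<gamma> (x + of_int k / real n) = Rpow n k (\<gamma> x)"
proof (induction k rule: int_induct[where k = 0])
  case base
  then show ?case by simp
next
  case (step1 k)
  have "\<gamma> (x + of_int (k + 1) / real n) = rotR n (\<gamma> (x + of_int k / real n))"
    using rot[of "x + of_int k / real n"] by (simp add: add_divide_distrib add.assoc)
  then show ?case
    using step1 Rpow_add[of n 1 k] by (simp add: add.commute)
next
  case (step2 k)
  have "\<gamma> (x + of_int k / real n) = rotR n (\<gamma> (x + of_int (k - 1) / real n))"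
    using rot[of "x + of_int (k - 1) / real n"] by (simp add: diff_divide_distrib)
  then have "\<gamma> (x + of_int (k - 1) / real n) = Rpow n (-1) (\<gamma> (x + of_int k / real n))"
    using Rpow_add[of n "-1" 1] by simp
  then show ?case
    using step2 Rpow_add[of n "-1" k] by simp
qed

lemma vector_derivative_shift:
  fixes f :: "real \<Rightarrow> 'a::real_normed_algebra"
  assumes diff: "\<And>y. f differentiable at y" and shift: "\<And>y. f (y + a) = c * f y"
  shows "vector_derivative f (at (y + a)) = c * vector_derivative f (at y)"
proof -
  have "((\<lambda>t. t + a) has_vector_derivative 1) (at y)"
    by (auto intro!: derivative_eq_intros)
  from vector_diff_chain_at[OF this vector_derivative_works[THEN iffD1, OF diff]]
  have "((\<lambda>t. c * f t) has_vector_derivative vector_derivative f (at (y + a))) (at y)"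
    by (simp add: o_def shift)
  moreover have "((\<lambda>t. c * f t) has_vector_derivative c * vector_derivative f (at y)) (at y)"
    using diff vector_derivative_works has_vector_derivative_mult_right by blast
  ultimately show ?thesis
    by (rule vector_derivative_unique_at)
qed

lemma curvature_shift:
  assumes C2: "C2_curve \<gamma>" and shift: "\<And>y. \<gamma> (y + a) = c * \<gamma> y" and unit: "cmod c = 1"
  shows "curvature \<gamma> (x + a) = curvature \<gamma> x"
proof -
  have tangent: "tangent \<gamma> (y + a) = c * tangent \<gamma> y" for y
    using C2 shift vector_derivative_shift unfolding C2_curve_def tangent_def by blast
  have accel: "accel \<gamma> (x + a) = c * accel \<gamma> x"
    using C2 tangent vector_derivative_shift unfolding C2_curve_def accel_def by blast
  have "cnj c * c = 1"
    using unit complex_norm_square[of c] by (simp add: mult.commute)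
  then have "cnj (tangent \<gamma> (x + a)) * accel \<gamma> (x + a) = cnj (tangent \<gamma> x) * accel \<gamma> x"
    by (simp add: tangent accel mult_ac)
  moreover have "cmod (tangent \<gamma> (x + a)) = cmod (tangent \<gamma> x)"
    by (simp add: tangent unit norm_mult)
  ultimately show ?thesis
    unfolding curvature_def by simp
qed

lemma curvature_equivariant_shift:
  assumes "C2_curve \<gamma>" and rot: "\<And>x. \<gamma> (x + 1 / real n) = rotR n (\<gamma> x)"
  shows "curvature \<gamma> (x + of_int k / real n) = curvature \<gamma> x"
proof (rule curvature_shift[OF \<open>C2_curve \<gamma>\<close>])
  show "\<gamma> (y + of_int k / real n) = cis (2 * pi * of_int k / real n) * \<gamma> y" for y
    using equivariant_shift_Rpow[where \<gamma> = \<gamma>, OF rot] unfolding Rpow_def by blast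
qed simp

lemma shift_invariant_const:
  fixes f :: "int \<Rightarrow> 'a"
  assumes "\<And>i. f (i + 1) = f i"
  shows "f i = f 0"
proof (induction i rule: int_induct[where k = 0])
  case (step2 i)
  then show ?case using assms[of "i - 1"] by simp
qed (simp_all add: assms)

lemma translation_iterate:
  fixes g :: "int \<Rightarrow> 'a::ring_1"
  assumes "\<And>i. g (i + p) = g i + c"
  shows "g (i + p * t) = g i + of_int t * c"
proof (induction t rule: int_induct[where k = 0])
  case (step1 t)
  have "g (i + p * (t + 1)) = g ((i + p * t) + p)" by (simp add: algebra_simps)
  also have "\<dots> = g (i + p * t) + c" using assms by blast
  finally show ?case using step1 by (simp add: algebra_simps)
next
  case (step2 t)
  have "g (i + p * t) = g ((i + p * (t - 1)) + p)" by (simp add: algebra_simps)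
  also have "\<dots> = g (i + p * (t - 1)) + c" using assms by blast
  finally show ?case using step2 by (simp add: algebra_simps)
qed simp

lemma shift_congruent_imp_translation:
  fixes X :: "int \<Rightarrow> real"
  assumes step: "\<And>i. 0 < X (i + 1) - X i" "\<And>i. X (i + 1) - X i < 1"
    and cong: "\<And>i. X (i + s) - X i - a \<in> \<int>"
  shows "X (i + s) = X i + (X s - X 0)"
proof -
  have "X (i + 1 + s) - X (i + 1) = X (i + s) - X i" for i
  proof -
    have "(X (i + 1 + s) - X (i + 1) - a) - (X (i + s) - X i - a) \<in> \<int>"
      by (intro Ints_diff cong)
    moreover have "\<bar>(X (i + 1 + s) - X (i + 1) - a) - (X (i + s) - X i - a)\<bar> < 1"
      using step[of i] step[of "i + s"] by (simp add: ac_simps)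
    ultimately show ?thesis
      using Ints_nonzero_abs_less1 by fastforce
  qed
  from shift_invariant_const[of "\<lambda>i. X (i + s) - X i", OF this]
  have "X (i + s) - X i = X s - X 0" by simp
  then show ?thesis by simp
qed

lemma rotation_number_of_translation:
  fixes X :: "int \<Rightarrow> real"
  assumes trans: "\<And>i. X (i + p) = X i + c" and "p > 0" and rot: "has_rotation_number X \<rho>"
  shows "c = of_int p * \<rho>"
proof -
  have mult_p: "filterlim (\<lambda>j. p * j) at_top at_top"
    unfolding filterlim_at_top eventually_at_top_linorder
  proof
    fix z :: int
    have "z \<le> p * j" if "max z 0 \<le> j" for j
      using that \<open>p > 0\<close> mult_right_mono[of 1 p j] by linarith
    then show "\<exists>j0. \<forall>j\<ge>j0. z \<le> p * j" by blast
  qed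
  have lim_rot: "((\<lambda>j. X (p * j) / of_int (p * j)) \<longlongrightarrow> \<rho>) at_top"
    using filterlim_compose[OF rot[unfolded has_rotation_number_def] mult_p] by (simp add: o_def)
  have "((\<lambda>j. X 0 / of_int (p * j) + c / of_int p) \<longlongrightarrow> 0 + c / of_int p) at_top"
    by (intro tendsto_add tendsto_const tendsto_divide_0[OF tendsto_const]
        filterlim_at_top_imp_at_infinity filterlim_compose[OF filterlim_real_of_int_at_top mult_p])
  moreover have "\<forall>\<^sub>F j in at_top. X 0 / of_int (p * j) + c / of_int p = X (p * j) / of_int (p * j)"
    unfolding eventually_at_top_linorder
  proof (intro exI[of _ 1] allI impI)
    fix j :: int
    assume "1 \<le> j"
    have "X (p * j) = X 0 + of_int j * c"
      using translation_iterate[of X p c 0 j] trans by simp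
    then show "X 0 / of_int (p * j) + c / of_int p = X (p * j) / of_int (p * j)"
      using \<open>1 \<le> j\<close> \<open>p > 0\<close> by (simp add: add_divide_distrib)
  qed
  ultimately have "((\<lambda>j. X (p * j) / of_int (p * j)) \<longlongrightarrow> c / of_int p) at_top"
    by (simp add: tendsto_cong)
  with lim_rot have "\<rho> = c / of_int p"
    using tendsto_unique trivial_limit_at_top_linorder by blast
  then show ?thesis
    using \<open>p > 0\<close> by simp
qed

lemma step_eq_of_coprime_translations:
  fixes X :: "int \<Rightarrow> real"
  assumes per: "\<And>i. X (i + int n) = X i + real m"
    and trans: "\<And>i. X (i + s) = X i + c" and cong: "c - 1 / real n \<in> \<int>" and "n > 0"
  shows "X (i + 1) - X i = real m / real n"
proof -
  obtain t where t: "c = 1 / real n + of_int t"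
    using cong Ints_cases by (metis diff_eq_eq add.commute)
  have "X (0 + s * int n) = X 0 + of_int (int n) * c"
    using translation_iterate[of X s c] trans by blast
  moreover have "X (0 + int n * s) = X 0 + of_int s * real m"
    using translation_iterate[of X "int n" "real m"] per by blast
  ultimately have "real n * c = of_int s * real m"
    by (simp add: mult.commute)
  then have "real_of_int (s * int m) = real_of_int (1 + int n * t)"
    using t \<open>n > 0\<close> by (simp add: distrib_left)
  then have "s * int m = 1 + int n * t"
    by (simp only: of_int_eq_iff)
  then have bezout: "i + 1 = i + s * int m + int n * (- t)"
    by simp
  have "X (i + 1) = X (i + s * int m) + of_int (- t) * real m"
    unfolding bezout using translation_iterate[of X "int n" "real m"] per by blast
  also have "\<dots> = X i + real m * c - of_int t * real m"
    using translation_iterate[of X s c] trans by simp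
  finally show ?thesis
    using t \<open>n > 0\<close> by (simp add: algebra_simps)
qed

lemma reversal_increment:
  fixes X :: "int \<Rightarrow> real"
  assumes step: "\<And>i. 0 < X (i + 1) - X i" "\<And>i. X (i + 1) - X i < 1"
    and cong: "\<And>i. X (s - i) - X i - a \<in> \<int>"
  shows "X (s - i) - X i = X s - X 0 - of_int i"
proof -
  define e where "e i = X (s - i) - X i - a" for i
  have "e (i + 1) = e i + (- 1)" for i
  proof -
    have eq: "e i - e (i + 1) = (X (s - i) - X (s - i - 1)) + (X (i + 1) - X i)"
      unfolding e_def by (simp add: algebra_simps)
    have "e i - e (i + 1) \<in> \<int>"
      unfolding e_def by (intro Ints_diff cong)
    moreover have "0 < e i - e (i + 1) - 1 + 1" "e i - e (i + 1) - 1 < 1"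
      using step[of i] step[of "s - i - 1"] unfolding eq by simp_all
    ultimately have "e i - e (i + 1) - 1 = 0"
      using Ints_nonzero_abs_less1[of "e i - e (i + 1) - 1"] by force
    then show ?thesis by simp
  qed
  from translation_iterate[of e 1 "- 1", OF this, of 0 i] show ?thesis
    unfolding e_def by simp
qed

lemma step_eq_of_reversing_symmetry:
  fixes X :: "int \<Rightarrow> real"
  assumes step: "\<And>i. 0 < X (i + 1) - X i" "\<And>i. X (i + 1) - X i < 1"
    and per: "\<And>i. X (i + int n) = X i + real m"
    and cong: "\<And>i. X (s - i) - X i - 1 / real n \<in> \<int>"
    and "coprime m n"
  shows "X (i + 1) - X i = real m / real n"
proof -
  have "X (s - int n) - X (int n) = X s - X 0 - real n"
    using reversal_increment[OF step cong] by simp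
  moreover have "X (s - int n) = X s - real m" "X (int n) = X 0 + real m"
    using per[of "s - int n"] per[of 0] by simp_all
  ultimately have "n = 2 * m"
    by linarith
  with \<open>coprime m n\<close> have m: "m = 1" and n: "n = 2"
    by simp_all
  have cong_half: "X (s - i) - X i - 1 / 2 \<in> \<int>" for i
    using cong[of i] n by simp
  have alternate: "X (i + 2) - X (i + 1) = 1 - (X (i + 1) - X i)" for i
    using per[of i] m n by (simp add: add.assoc)
  obtain u where u: "X (u + 1) - X u = 1 / 2"
  proof (cases "even s")
    case True
    then obtain u where "s = 2 * u" by blast
    with cong_half[of u] have "- 1 / 2 \<in> (\<int> :: real set)" by simp
    then show ?thesis
      using Ints_nonzero_abs_less1[of "- 1 / 2 :: real"] by simp
  next
    case False
    then obtain u where "s = 2 * u + 1" using oddE by blast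
    with cong_half[of u] have "X (u + 1) - X u - 1 / 2 \<in> \<int>" by simp
    moreover have "\<bar>X (u + 1) - X u - 1 / 2\<bar> < 1"
      using step[of u] by simp
    ultimately show ?thesis
      using that Ints_nonzero_abs_less1 by fastforce
  qed
  have "X (i + 1) - X i = 1 / 2"
  proof (induction i rule: int_induct[where k = u])
    case (step1 i)
    then show ?case using alternate[of i] by (simp add: add.assoc)
  next
    case (step2 i)
    have "X (i - 1 + 2) - X (i - 1 + 1) = 1 - (X (i - 1 + 1) - X (i - 1))"
      by (rule alternate)
    then show ?case using step2 by (simp add: algebra_simps)
  qed (rule u)
  then show ?thesis
    using m n by simp
qed

lemma lift_step_eq_rotation_number:
  fixes X :: "int \<Rightarrow> real"
  assumes inj: "\<And>x y. \<gamma> x = \<gamma> y \<Longrightarrow> x - y \<in> \<int>"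
    and rot: "\<And>x. \<gamma> (x + 1 / real n) = rotR n (\<gamma> x)"
    and per: "\<And>i. Z (i + int n) = Z i"
    and lift: "is_lift \<gamma> Z X"
    and rotnum: "has_rotation_number X (real m / real n)"
    and sym: "spatiotemporal_symmetry (rotR n) Z"
    and "coprime m n" and "n > 0"
  shows "X (i + 1) - X i = real m / real n"
proof -
  have step: "\<And>i. 0 < X (i + 1) - X i" "\<And>i. X (i + 1) - X i < 1"
    and onto: "\<And>i. \<gamma> (X i) = Z i"
    using lift unfolding is_lift_def by auto
  have "X (i + int n) - X i - 0 \<in> \<int>" for i
    using inj onto per by simp
  then have trans_n: "X (i + int n) = X i + (X (int n) - X 0)" for i
    by (rule shift_congruent_imp_translation[where X = X, OF step])
  have "X (int n) - X 0 = real m"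
    using rotation_number_of_translation[OF trans_n _ rotnum] \<open>n > 0\<close> by simp
  with trans_n have period: "X (i + int n) = X i + real m" for i
    by simp
  have rotated: "\<gamma> (X i + 1 / real n) = rotR n (Z i)" for i
    using rot onto by simp
  from sym obtain s where "(\<forall>i. rotR n (Z i) = Z (s + i)) \<or> (\<forall>i. rotR n (Z i) = Z (s - i))"
    unfolding spatiotemporal_symmetry_def by blast
  then show ?thesis
  proof
    assume "\<forall>i. rotR n (Z i) = Z (s + i)"
    then have cong: "X (i + s) - X i - 1 / real n \<in> \<int>" for i
      using inj[of "X (i + s)" "X i + 1 / real n"] onto rotated by (simp add: add.commute diff_diff_eq)
    have "X (i + s) = X i + (X s - X 0)" for i
      by (rule shift_congruent_imp_translation[where X = X, OF step cong])
    moreover have "(X s - X 0) - 1 / real n \<in> \<int>"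
      using cong[of 0] by simp
    ultimately show ?thesis
      using step_eq_of_coprime_translations[where X = X, OF period] \<open>n > 0\<close> by blast
  next
    assume "\<forall>i. rotR n (Z i) = Z (s - i)"
    then have cong: "X (s - i) - X i - 1 / real n \<in> \<int>" for i
      using inj[of "X (s - i)" "X i + 1 / real n"] onto rotated by (simp add: diff_diff_eq)
    show ?thesis
      by (rule step_eq_of_reversing_symmetry[where X = X, OF step period cong \<open>coprime m n\<close>])
  qed
qed

lemma affine_of_constant_step:
  fixes X :: "int \<Rightarrow> 'a::ring_1"
  assumes "\<And>i. X (i + 1) - X i = c"
  shows "X i = X 0 + c * of_int i"
proof -
  have "X (i + 1) = X i + c" for i
    using assms[of i] by (metis add.commute diff_eq_eq)
  from translation_iterate[of X 1 c, OF this, of 0 i] show ?thesis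
    by (simp add: mult_of_int_commute)
qed

lemma Birkhoff_affine:
  assumes "\<And>i. X i = a + c * of_int i"
  shows "Birkhoff X"
  unfolding Birkhoff_def assms by (simp add: distrib_left)

lemma equivariant_lift_orbit:
  assumes rot: "\<And>x. \<gamma> (x + 1 / real n) = rotR n (\<gamma> x)"
    and onto: "\<And>i. \<gamma> (X i) = Z i"
    and affine: "\<And>i. X i = X 0 + real k / real n * of_int i"
  shows "Z i = Rpow n (int k * i) (Z 0)"
proof -
  have "Z i = \<gamma> (X 0 + of_int (int k * i) / real n)"
    using onto[of i] affine[of i] by simp
  also have "\<dots> = Rpow n (int k * i) (\<gamma> (X 0))"
    by (rule equivariant_shift_Rpow[where \<gamma> = \<gamma>, OF rot])
  finally show ?thesis
    using onto[of 0] by simp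
qed

lemma Rpow_orbit_succ:
  assumes "\<And>i. Z i = Rpow n (k * i) (Z 0)"
  shows "Z (i + 1) = Rpow n k (Z i)"
  using assms[of "i + 1"] assms[of i] Rpow_add[of n k "k * i"] by (simp add: distrib_left add.commute)

lemma Rpow_orbit_chord_norm:
  fixes Z :: "int \<Rightarrow> complex"
  assumes succ: "\<And>i. Z (i + 1) = Rpow n k (Z i)"
  shows "cmod (Z (i + 1) - Z i) = cmod (Z 1 - Z 0)"
proof -
  have "cmod (Z (i + 1 + 1) - Z (i + 1)) = cmod (Z (i + 1) - Z i)" for i
    unfolding succ[of "i + 1"] succ[of i] Rpow_diff[symmetric] by simp
  from shift_invariant_const[of "\<lambda>i. cmod (Z (i + 1) - Z i)", OF this] show ?thesis
    by simp
qed

lemma oangle_cis_mult: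
  assumes "v \<noteq> 0" and "0 < \<theta>" and "\<theta> < 2 * pi"
  shows "oangle (cis \<theta> * v) v = \<theta>"
proof (cases "\<theta> \<le> pi")
  case True
  then have "Arg (cis \<theta>) = \<theta>"
    using \<open>0 < \<theta>\<close> by (intro Arg_cis) auto
  then show ?thesis
    unfolding oangle_def using \<open>v \<noteq> 0\<close> \<open>0 < \<theta>\<close> by simp
next
  case False
  have "cis \<theta> = cis (\<theta> - 2 * pi)"
    by (simp add: cis_divide[symmetric])
  then have "Arg (cis \<theta>) = \<theta> - 2 * pi"
    using False \<open>\<theta> < 2 * pi\<close> by (simp add: Arg_cis)
  then show ?thesis
    unfolding oangle_def using \<open>v \<noteq> 0\<close> \<open>\<theta> < 2 * pi\<close> by simp
qed

lemma Rpow_orbit_oangle: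
  fixes Z :: "int \<Rightarrow> complex"
  assumes succ: "\<And>i. Z (i + 1) = Rpow n (int k) (Z i)"
    and "Z i \<noteq> Z (i - 1)" and "0 < k" and "k < n"
  shows "oangle (Z (i + 1) - Z i) (Z i - Z (i - 1)) = 2 * pi * real k / real n"
proof -
  have "Z i = Rpow n (int k) (Z (i - 1))"
    using succ[of "i - 1"] by simp
  then have "Z (i + 1) - Z i = cis (2 * pi * real k / real n) * (Z i - Z (i - 1))"
    using succ[of i] by (simp add: Rpow_def right_diff_distrib)
  moreover have "0 < 2 * pi * real k / real n" "2 * pi * real k / real n < 2 * pi"
    using \<open>0 < k\<close> \<open>k < n\<close> by (simp_all add: field_simps)
  ultimately show ?thesis
    using oangle_cis_mult \<open>Z i \<noteq> Z (i - 1)\<close> by simp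
qed

theorem mainTheorem14:
  fixes m n :: nat and \<gamma> :: "real \<Rightarrow> complex"
    and Z :: "int \<Rightarrow> complex" and X :: "int \<Rightarrow> real"
  assumes "coprime m n" and "1 \<le> m" and "m \<le> n - 1"
    and "Dn_billiard_curve n \<gamma>"
    and "billiard_sequence \<gamma> Z"
    and "\<forall>i. Z (i + int n) = Z i"
    and "is_lift \<gamma> Z X"
    and "has_rotation_number X (real m / real n)"
    and "\<forall>k::int. spatiotemporal_symmetry (Rpow n k) Z"
  shows "Birkhoff X
    \<and> (\<forall>i. Z i = Rpow n (int m * i) (Z 0))
    \<and> (\<forall>i. X i = X 0 + real m / real n * real_of_int i)
    \<and> (\<forall>i. cmod (Z (i + 1) - Z i) = cmod (Z 1 - Z 0))
    \<and> (\<forall>i. curvature \<gamma> (X i) = curvature \<gamma> (X 0))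
    \<and> (billiard_orbit \<gamma> Z X \<longrightarrow>
         (\<forall>i. oangle (Z (i + 1) - Z i) (Z i - Z (i - 1)) / 2 = real m * pi / real n))"
proof -
  have C2: "C2_curve \<gamma>" and inj: "\<And>x y. \<gamma> x = \<gamma> y \<Longrightarrow> x - y \<in> \<int>"
    and rot: "\<And>x. \<gamma> (x + 1 / real n) = rotR n (\<gamma> x)"
    using assms(4) unfolding Dn_billiard_curve_def by blast+
  have "0 < n" and "m < n" and onto: "\<And>i. \<gamma> (X i) = Z i"
    using assms(2,3,7) unfolding is_lift_def by auto
  have "X (i + 1) - X i = real m / real n" for i
    using lift_step_eq_rotation_number[OF inj rot _ assms(7,8) _ assms(1) \<open>0 < n\<close>] assms(6,9) by blast
  then have X_affine: "X i = X 0 + real m / real n * of_int i" for i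
    by (rule affine_of_constant_step)
  have Z_orbit: "Z i = Rpow n (int m * i) (Z 0)" for i
    by (rule equivariant_lift_orbit[OF rot onto X_affine])
  have Z_succ: "Z (i + 1) = Rpow n (int m) (Z i)" for i
    by (rule Rpow_orbit_succ[OF Z_orbit])
  have "curvature \<gamma> (X i) = curvature \<gamma> (X 0)" for i
    using curvature_equivariant_shift[OF C2 rot, of "X 0" "int m * i"] X_affine[of i] by simp
  moreover
  have "oangle (Z (i + 1) - Z i) (Z i - Z (i - 1)) / 2 = real m * pi / real n" for i
  proof -
    have "Z i \<noteq> Z (i - 1)"
      using assms(5) unfolding billiard_sequence_def by (metis diff_add_cancel)
    then show ?thesis
      using Rpow_orbit_oangle[where Z = Z, OF Z_succ _ _ \<open>m < n\<close>] assms(2) by simp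
  qed
  ultimately show ?thesis
    using Birkhoff_affine[OF X_affine] Z_orbit X_affine Rpow_orbit_chord_norm[where Z = Z, OF Z_succ]
    by blast
qed

end
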